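(* Let $n\ge 1$, $\lambda>0$, and let $\mathbf{y}$ be an $n\times 2$ data matrix whose rows are modeled as i.i.d. $\mathcal{N}_2(0,\boldsymbol{\Omega}^{-1})$, so that the likelihood is $f(\mathbf{y}\mid\boldsymbol{\Omega})=(2\pi)^{-n}|\boldsymbol{\Omega}|^{n/2}\exp\{-\tfrac12\mathrm{tr}(\mathbf{S}\boldsymbol{\Omega})\}$ with $\mathbf{S}=\mathbf{y}^T\mathbf{y}=\begin{bmatrix}s_{11}&s_{12}\\ s_{12}&s_{22}\end{bmatrix}$. Equip $\boldsymbol{\Omega}=\begin{bmatrix}\omega_{11}&\omega_{12}\\ \omega_{12}&\omega_{22}\end{bmatrix}$ with the Bayesian graphical lasso prior $$f(\boldsymbol{\Omega}\mid\lambda)=C_{\mathrm{BGL}}^{-1}\,\frac{\lambda}{2}e^{-\lambda|\omega_{12}|}\,\prod_{j=1}^{2}\frac{\lambda}{2}e^{-\lambda\omega_{jj}/2}\;\mathbf{1}(\boldsymbol{\Omega}\text{ positive definite}),$$ where $C_{\mathrm{BGL}}$ is the normalizing constant. Then the marginal likelihood $f(\mathbf{y}\mid\lambda)=\int f(\mathbf{y}\mid\boldsymbol{\Omega})f(\boldsymbol{\Omega}\mid\lambda)\,d\boldsymbol{\Omega}$ equals $$C_{\mathrm{BGL}}^{-1}\frac{\lambda^3\,\Gamma\!\left(\frac n2+1\right)\Gamma\!\left(\frac{n+3}{2}\right)}{\pi^{n-\frac12}\Big[(\lambda+s_{11})(\lambda+s_{22})-(\lambda-|s_{12}|)^2\Big]^{(n+3)/2}}\;\mathbb{E}_t\big(F(t)\big),$$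 where $t\sim\mathrm{Gamma}\!\left(\text{shape}=\frac{n+3}{2},\ \text{rate}=\frac{(\lambda+s_{11})(\lambda+s_{22})-(\lambda-|s_{12}|)^2}{2}\right)$ and $$F(t)=\Phi\!\left[\lambda t^{1/2}\left(\frac{|s_{12}|}{\lambda}-1\right)\right]+\exp(2\lambda|s_{12}|t)\,\Phi\!\left[-\lambda t^{1/2}\left(\frac{|s_{12}|}{\lambda}+1\right)\right],$$ and moreover $C_{\mathrm{BGL}}=\int_0^\infty x^{1/2}\int_x^\infty y^{-1/2}e^{-y}\,dy\,dx\approx 0.67$.
   Context: $\Gamma(\cdot)$ denotes the gamma function and $\Phi$ the standard normal cumulative distribution function. $\mathrm{Gamma}(\text{shape}=a,\text{rate}=b)$ has density proportional to $x^{a-1}e^{-bx}$ on $x>0$. The integral defining the marginal likelihood is over all real $\omega_{11},\omega_{12},\omega_{22}$ (the prior vanishes outside positive definite matrices). *)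

theory Defs
  imports "HOL-Analysis.Analysis" "HOL-Probability.Probability"
begin

definition Phi :: "real \<Rightarrow> real" where
  "Phi x = (LINT t:{..x}|lborel. std_normal_density t)"

definition gamma_dens :: "real \<Rightarrow> real \<Rightarrow> real \<Rightarrow> real" where
  "gamma_dens a b t = (if t > 0 then b powr a * t powr (a - 1) * exp (- b * t) / Gamma a else 0)"

definition gamma_expect :: "real \<Rightarrow> real \<Rightarrow> (real \<Rightarrow> real) \<Rightarrow> real" where
  "gamma_expect a b F = (LINT t|lborel. F t * gamma_dens a b t)"

definition pos_def2 :: "real \<Rightarrow> real \<Rightarrow> real \<Rightarrow> bool" where
  "pos_def2 w11 w12 w22 \<longleftrightarrow>
     (\<forall>x1 x2. (x1, x2) \<noteq> (0, 0) \<longrightarrow> w11 * x1\<^sup>2 + 2 * w12 * x1 * x2 + w22 * x2\<^sup>2 > 0)"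

text \<open>Entries of S = y^T y for an n x 2 data matrix y (rows 1..n, columns 1,2).\<close>
definition Smat :: "nat \<Rightarrow> (nat \<Rightarrow> nat \<Rightarrow> real) \<Rightarrow> nat \<Rightarrow> nat \<Rightarrow> real" where
  "Smat n y j k = (\<Sum>i=1..n. y i j * y i k)"

definition lik :: "nat \<Rightarrow> (nat \<Rightarrow> nat \<Rightarrow> real) \<Rightarrow> real \<Rightarrow> real \<Rightarrow> real \<Rightarrow> real" where
  "lik n y w11 w12 w22 =
     (2 * pi) powr (- real n) * (w11 * w22 - w12\<^sup>2) powr (real n / 2)
     * exp (- (Smat n y 1 1 * w11 + 2 * Smat n y 1 2 * w12 + Smat n y 2 2 * w22) / 2)"

definition bgl_unnorm :: "real \<Rightarrow> real \<Rightarrow> real \<Rightarrow> real \<Rightarrow> real" where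
  "bgl_unnorm lam w11 w12 w22 =
     lam / 2 * exp (- lam * \<bar>w12\<bar>) * ((lam / 2) * exp (- lam * w11 / 2)) * ((lam / 2) * exp (- lam * w22 / 2))
     * (if pos_def2 w11 w12 w22 then 1 else 0)"

definition C_BGL :: "real \<Rightarrow> real" where
  "C_BGL lam = (LINT w|lborel. (\<lambda>(w11, w12, w22). bgl_unnorm lam w11 w12 w22) (w :: real \<times> real \<times> real))"

definition bgl_prior :: "real \<Rightarrow> real \<Rightarrow> real \<Rightarrow> real \<Rightarrow> real" where
  "bgl_prior lam w11 w12 w22 = bgl_unnorm lam w11 w12 w22 / C_BGL lam"

definition marg_lik :: "nat \<Rightarrow> (nat \<Rightarrow> nat \<Rightarrow> real) \<Rightarrow> real \<Rightarrow> real" where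
  "marg_lik n y lam = (LINT w|lborel.
     (\<lambda>(w11, w12, w22). lik n y w11 w12 w22 * bgl_prior lam w11 w12 w22) (w :: real \<times> real \<times> real))"

end

theory Submission
  imports Defs
begin

text \<open>
  Write \<open>\<Omega> = [[a, c], [c, b]]\<close>. On positive definite matrices the likelihood times the prior is
  \<open>(a b - c\<^sup>2)\<^bsup>n/2\<^esup> exp (- (A a + B b) / 2 - s\<^sub>1\<^sub>2 c - \<lambda> \<bar>c\<bar>)\<close> with \<open>A = \<lambda> + s\<^sub>1\<^sub>1\<close>, \<open>B = \<lambda> + s\<^sub>2\<^sub>2\<close>.
  Integrate out \<open>a\<close> first: the shift \<open>a = c\<^sup>2 / b + u\<close> turns the determinant into \<open>b u\<close>, so
  \<open>u\<close> contributes a Gamma integral. What remains in \<open>c\<close> is a Gaussian with a Laplace factor,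
  whose integral is a combination of two values of \<open>Phi\<close>; the substitution \<open>b = A t\<close> then
  leaves exactly the expectation of \<open>F\<close> under \<open>Gamma ((n + 3) / 2, D / 2)\<close>.
  The same computation with \<open>n = 0\<close> and \<open>S = 0\<close> gives \<open>C_BGL = 2 / 3\<close>; the remaining \<open>t\<close>-integral is
  evaluated by Tonelli against the normal density, using \<open>E \<bar>Z\<bar>\<^sup>3 = 2 sqrt (2 / pi)\<close>.
\<close>

section \<open>The standard normal distribution function\<close>

lemma ennreal_Phi: "ennreal (Phi x) = (\<integral>\<^sup>+z. ennreal (indicator {..x} z * std_normal_density z) \<partial>lborel)"
proof -
  have "integrable lborel (\<lambda>z. std_normal_density z * indicator {..x} z)"
    by (intro integrable_real_mult_indicator integrable_normal_density) auto
  then show ?thesis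
    unfolding Phi_def set_lebesgue_integral_def
    by (subst nn_integral_eq_integral) (auto simp: mult.commute)
qed

lemma ennreal_Phi_minus: "ennreal (Phi (- x)) = (\<integral>\<^sup>+z. ennreal (indicator {x..} z * std_normal_density z) \<partial>lborel)"
proof -
  let ?f = "\<lambda>z. ennreal (indicator {..- x} z * std_normal_density z)"
  have "ennreal (Phi (- x)) = ennreal \<bar>-1\<bar> * (\<integral>\<^sup>+z. ?f (0 + - 1 * z) \<partial>lborel)"
    unfolding ennreal_Phi by (rule nn_integral_real_affine) auto
  also have "(\<integral>\<^sup>+z. ?f (0 + - 1 * z) \<partial>lborel) = (\<integral>\<^sup>+z. ennreal (indicator {x..} z * std_normal_density z) \<partial>lborel)"
    by (intro nn_integral_cong) (simp add: indicator_def std_normal_density_def)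
  finally show ?thesis by simp
qed

lemma Phi_nonneg: "Phi x \<ge> 0"
  unfolding Phi_def set_lebesgue_integral_def by (intro integral_nonneg_AE) auto

lemma mono_Phi: "mono Phi"
proof
  fix x y :: real assume "x \<le> y"
  then have "ennreal (Phi x) \<le> ennreal (Phi y)"
    unfolding ennreal_Phi by (intro nn_integral_mono) (auto simp: indicator_def)
  then show "Phi x \<le> Phi y" using Phi_nonneg by simp
qed

lemma borel_measurable_Phi[measurable]: "Phi \<in> borel_measurable borel"
  using mono_Phi by (rule borel_measurable_mono)

lemma ennreal_two_Phi_minus:
  assumes "x > 0"
  shows "ennreal (2 * Phi (- x)) = (\<integral>\<^sup>+z. ennreal (indicator {z. x \<le> \<bar>z\<bar>} z * std_normal_density z) \<partial>lborel)"
proof -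
  have "(\<integral>\<^sup>+z. ennreal (indicator {z. x \<le> \<bar>z\<bar>} z * std_normal_density z) \<partial>lborel)
      = (\<integral>\<^sup>+z. ennreal (indicator {..- x} z * std_normal_density z)
             + ennreal (indicator {x..} z * std_normal_density z) \<partial>lborel)"
    using assms by (intro nn_integral_cong) (auto simp: indicator_def)
  also have "\<dots> = (\<integral>\<^sup>+z. ennreal (indicator {..- x} z * std_normal_density z) \<partial>lborel)
                + (\<integral>\<^sup>+z. ennreal (indicator {x..} z * std_normal_density z) \<partial>lborel)"
    by (rule nn_integral_add) auto
  also have "\<dots> = ennreal (Phi (- x)) + ennreal (Phi (- x))"
    by (simp only: ennreal_Phi[symmetric] ennreal_Phi_minus[symmetric])
  finally show ?thesis by (simp add: Phi_nonneg flip: ennreal_plus)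
qed

section \<open>Gamma and Gaussian integrals\<close>

lemma nn_integral_powr_exp:
  assumes "\<rho> > 0" and "k > -1"
  shows "(\<integral>\<^sup>+u. ennreal (indicator {0<..} u * u powr k * exp (- \<rho> * u)) \<partial>lborel)
         = ennreal (Gamma (k + 1) / \<rho> powr (k + 1))"
proof -
  let ?f = "\<lambda>u. ennreal (indicator {0<..} u * u powr k * exp (- \<rho> * u))"
  have "integral\<^sup>N lborel ?f = ennreal \<bar>1/\<rho>\<bar> * (\<integral>\<^sup>+t. ?f (0 + 1/\<rho> * t) \<partial>lborel)"
    using assms by (intro nn_integral_real_affine) auto
  also have "(\<integral>\<^sup>+t. ?f (0 + 1/\<rho> * t) \<partial>lborel)
      = (\<integral>\<^sup>+t. ennreal (\<rho> powr (-k)) * ennreal (indicator {0..} t * t powr (k + 1 - 1) / exp t) \<partial>lborel)"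
  proof (intro nn_integral_cong)
    fix t :: real
    show "?f (0 + 1/\<rho> * t) = ennreal (\<rho> powr (-k)) * ennreal (indicator {0..} t * t powr (k + 1 - 1) / exp t)"
    proof (cases "t > 0")
      case True
      then have "(t / \<rho>) powr k = \<rho> powr (-k) * t powr k"
        using assms by (simp add: powr_divide powr_minus_divide)
      then show ?thesis
        using True assms by (simp add: indicator_def exp_minus field_simps flip: ennreal_mult)
    next
      case False
      then show ?thesis using assms by (simp add: indicator_def zero_less_divide_iff)
    qed
  qed
  also have "\<dots> = ennreal (\<rho> powr (-k)) * ennreal (Gamma (k + 1))"
    using Gamma_conv_nn_integral_real[of "k + 1"] assms by (subst nn_integral_cmult) auto
  finally show ?thesis
    using assms by (simp add: Gamma_real_pos less_imp_le powr_add powr_minus_divide flip: ennreal_mult)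
qed

definition gauss_laplace :: "real \<Rightarrow> real \<Rightarrow> real \<Rightarrow> real" where
  "gauss_laplace s l v =
     exp (v * (s + l)\<^sup>2 / 2) * Phi (- (s + l) * sqrt v) + exp (v * (s - l)\<^sup>2 / 2) * Phi ((s - l) * sqrt v)"

lemma gauss_laplace_nonneg: "gauss_laplace s l v \<ge> 0"
  unfolding gauss_laplace_def by (intro add_nonneg_nonneg mult_nonneg_nonneg Phi_nonneg) auto

lemma borel_measurable_gauss_laplace[measurable]: "gauss_laplace s l \<in> borel_measurable borel"
  unfolding gauss_laplace_def[abs_def] by measurable

lemma gauss_laplace_uminus: "gauss_laplace (- s) l v = gauss_laplace s l v"
proof -
  have "(- s + l)\<^sup>2 = (s - l)\<^sup>2" "(- s - l)\<^sup>2 = (s + l)\<^sup>2" by algebra+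
  moreover have "- (- s + l) = s - l" "- s - l = - (s + l)" by simp_all
  ultimately show ?thesis unfolding gauss_laplace_def by (simp only: add.commute)
qed

lemma gauss_laplace_abs: "gauss_laplace \<bar>s\<bar> l = gauss_laplace s l"
  by (simp add: fun_eq_iff abs_if gauss_laplace_uminus)

lemma nn_integral_half_gaussian:
  assumes v: "v > 0"
  shows "(\<integral>\<^sup>+c. ennreal (indicator {0..} c * exp (- c\<^sup>2 / (2 * v) - \<beta> * c)) \<partial>lborel)
       = ennreal (sqrt (2 * pi * v) * exp (v * \<beta>\<^sup>2 / 2) * Phi (- \<beta> * sqrt v))"
proof -
  define r where "r = sqrt v"
  have r: "r > 0" "v = r\<^sup>2" using v by (auto simp: r_def)
  let ?f = "\<lambda>c. ennreal (indicator {0..} c * exp (- c\<^sup>2 / (2 * v) - \<beta> * c))"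
  let ?K = "sqrt (2 * pi) * exp (v * \<beta>\<^sup>2 / 2)"
  have "integral\<^sup>N lborel ?f = ennreal \<bar>-r\<bar> * (\<integral>\<^sup>+z. ?f (- v * \<beta> + - r * z) \<partial>lborel)"
    using r by (intro nn_integral_real_affine) auto
  also have "(\<integral>\<^sup>+z. ?f (- v * \<beta> + - r * z) \<partial>lborel)
      = (\<integral>\<^sup>+z. ennreal ?K * ennreal (indicator {..- \<beta> * r} z * std_normal_density z) \<partial>lborel)"
  proof (intro nn_integral_cong)
    fix z :: real
    have "- v * \<beta> + - r * z = r * (- \<beta> * r - z)"
      unfolding r(2) by (simp add: power2_eq_square algebra_simps)
    then have i: "indicator {0..} (- v * \<beta> + - r * z) = (indicator {..- \<beta> * r} z :: real)"
      using r by (simp add: indicator_def zero_le_mult_iff)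
    have e: "- (- v * \<beta> + - r * z)\<^sup>2 / (2 * v) - \<beta> * (- v * \<beta> + - r * z) = v * \<beta>\<^sup>2 / 2 + - z\<^sup>2 / 2"
      unfolding r(2) using r(1) by (simp add: field_simps power2_eq_square)
    have "indicator {0..} (- v * \<beta> + - r * z) * exp (- (- v * \<beta> + - r * z)\<^sup>2 / (2 * v) - \<beta> * (- v * \<beta> + - r * z))
        = ?K * (indicator {..- \<beta> * r} z * std_normal_density z)"
      unfolding i e exp_add std_normal_density_def by simp
    then show "?f (- v * \<beta> + - r * z) = ennreal ?K * ennreal (indicator {..- \<beta> * r} z * std_normal_density z)"
      by (simp add: ennreal_mult')
  qed
  also have "\<dots> = ennreal ?K * ennreal (Phi (- \<beta> * r))"
    by (subst nn_integral_cmult) (auto simp: ennreal_Phi)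
  also have "ennreal \<bar>-r\<bar> * (ennreal ?K * ennreal (Phi (- \<beta> * r))) = ennreal (r * ?K * Phi (- \<beta> * r))"
    using r by (simp add: ennreal_mult Phi_nonneg mult.assoc)
  finally show ?thesis
    by (simp add: r_def real_sqrt_mult mult_ac)
qed

lemma nn_integral_neg_half_gaussian:
  assumes v: "v > 0"
  shows "(\<integral>\<^sup>+c. ennreal (indicator {..<0} c * exp (- c\<^sup>2 / (2 * v) - \<beta> * c)) \<partial>lborel)
       = ennreal (sqrt (2 * pi * v) * exp (v * \<beta>\<^sup>2 / 2) * Phi (\<beta> * sqrt v))"
proof -
  let ?f = "\<lambda>c. ennreal (indicator {..<0} c * exp (- c\<^sup>2 / (2 * v) - \<beta> * c))"
  have "integral\<^sup>N lborel ?f = ennreal \<bar>-1\<bar> * (\<integral>\<^sup>+z. ?f (0 + - 1 * z) \<partial>lborel)"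
    by (intro nn_integral_real_affine) auto
  also have "(\<integral>\<^sup>+z. ?f (0 + - 1 * z) \<partial>lborel)
      = (\<integral>\<^sup>+z. ennreal (indicator {0..} z * exp (- z\<^sup>2 / (2 * v) - (- \<beta>) * z)) \<partial>lborel)"
  proof (rule nn_integral_cong_AE)
    show "AE z in lborel. ?f (0 + - 1 * z) = ennreal (indicator {0..} z * exp (- z\<^sup>2 / (2 * v) - (- \<beta>) * z))"
      using AE_lborel_singleton[of "0::real"] by eventually_elim (auto simp: indicator_def)
  qed
  also have "\<dots> = ennreal (sqrt (2 * pi * v) * exp (v * (- \<beta>)\<^sup>2 / 2) * Phi (- (- \<beta>) * sqrt v))"
    by (rule nn_integral_half_gaussian[OF v])
  finally show ?thesis by simp
qed

lemma nn_integral_gaussian_laplace: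
  assumes v: "v > 0"
  shows "(\<integral>\<^sup>+c. ennreal (exp (- c\<^sup>2 / (2 * v) - s * c - l * \<bar>c\<bar>)) \<partial>lborel)
       = ennreal (sqrt (2 * pi * v) * gauss_laplace s l v)"
proof -
  have "(\<integral>\<^sup>+c. ennreal (exp (- c\<^sup>2 / (2 * v) - s * c - l * \<bar>c\<bar>)) \<partial>lborel)
      = (\<integral>\<^sup>+c. ennreal (indicator {0..} c * exp (- c\<^sup>2 / (2 * v) - (s + l) * c))
               + ennreal (indicator {..<0} c * exp (- c\<^sup>2 / (2 * v) - (s - l) * c)) \<partial>lborel)"
    by (intro nn_integral_cong) (auto simp: indicator_def algebra_simps)
  also have "\<dots> = ennreal (sqrt (2 * pi * v) * exp (v * (s + l)\<^sup>2 / 2) * Phi (- (s + l) * sqrt v))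
                + ennreal (sqrt (2 * pi * v) * exp (v * (s - l)\<^sup>2 / 2) * Phi ((s - l) * sqrt v))"
    by (subst nn_integral_add) (simp_all only: nn_integral_half_gaussian[OF v] nn_integral_neg_half_gaussian[OF v], measurable)
  finally show ?thesis
    using v by (simp add: gauss_laplace_def Phi_nonneg distrib_left mult_ac flip: ennreal_plus)
qed

section \<open>Integrating over positive definite matrices\<close>

lemma pos_def2_iff: "pos_def2 a c b \<longleftrightarrow> 0 < a \<and> 0 < a * b - c\<^sup>2"
proof
  assume pd: "pos_def2 a c b"
  have a: "a > 0" using pd[unfolded pos_def2_def, rule_format, of 1 0] by simp
  have "a * c\<^sup>2 + 2 * c * c * (- a) + b * (- a)\<^sup>2 > 0"
    using pd[unfolded pos_def2_def, rule_format, of c "-a"] a by simp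
  then have "a * (a * b - c\<^sup>2) > 0" by (simp add: power2_eq_square algebra_simps)
  with a show "0 < a \<and> 0 < a * b - c\<^sup>2" by (simp add: zero_less_mult_iff)
next
  assume h: "0 < a \<and> 0 < a * b - c\<^sup>2"
  show "pos_def2 a c b" unfolding pos_def2_def
  proof (intro allI impI)
    fix x1 x2 :: real assume nz: "(x1, x2) \<noteq> (0, 0)"
    have "(a * x1 + c * x2)\<^sup>2 + (a * b - c\<^sup>2) * x2\<^sup>2 > 0"
      using h nz by (cases "x2 = 0") (auto intro: add_nonneg_pos)
    also have "(a * x1 + c * x2)\<^sup>2 + (a * b - c\<^sup>2) * x2\<^sup>2 = a * (a * x1\<^sup>2 + 2 * c * x1 * x2 + b * x2\<^sup>2)"
      by (simp add: power2_eq_square algebra_simps)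
    finally show "a * x1\<^sup>2 + 2 * c * x1 * x2 + b * x2\<^sup>2 > 0" using h by (simp add: zero_less_mult_iff)
  qed
qed

definition pd_kernel :: "real \<Rightarrow> real \<Rightarrow> real \<Rightarrow> real \<Rightarrow> real \<Rightarrow> real \<times> real \<times> real \<Rightarrow> real" where
  "pd_kernel k A B s l = (\<lambda>(a, c, b). if 0 < a \<and> 0 < a * b - c\<^sup>2
     then (a * b - c\<^sup>2) powr k * exp (- (A * a + B * b) / 2 - s * c - l * \<bar>c\<bar>) else 0)"

lemma pd_kernel_nonneg: "pd_kernel k A B s l w \<ge> 0"
  by (simp add: pd_kernel_def split: prod.split)

lemma borel_measurable_pd_kernel[measurable]: "pd_kernel k A B s l \<in> borel_measurable borel"
  unfolding pd_kernel_def borel_prod[symmetric] by measurable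

lemma nn_integral_lborel_triple:
  fixes f :: "real \<times> real \<times> real \<Rightarrow> ennreal"
  assumes f: "f \<in> borel_measurable borel"
  shows "(\<integral>\<^sup>+w. f w \<partial>lborel) = (\<integral>\<^sup>+b. \<integral>\<^sup>+c. \<integral>\<^sup>+a. f (a, c, b) \<partial>lborel \<partial>lborel \<partial>lborel)"
proof -
  have [measurable]: "f \<in> borel_measurable (lborel \<Otimes>\<^sub>M lborel)"
    "(\<lambda>y. \<integral>\<^sup>+a. f (a, y) \<partial>lborel) \<in> borel_measurable (lborel \<Otimes>\<^sub>M lborel)"
    using f by (simp_all add: borel_prod lborel_prod)
  have "(\<integral>\<^sup>+w. f w \<partial>lborel) = (\<integral>\<^sup>+w. f w \<partial>(lborel \<Otimes>\<^sub>M lborel))"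
    by (simp only: lborel_prod)
  also have "\<dots> = (\<integral>\<^sup>+y. \<integral>\<^sup>+a. f (a, y) \<partial>lborel \<partial>lborel)"
    by (rule lborel_pair.nn_integral_snd[symmetric]) measurable
  also have "\<dots> = (\<integral>\<^sup>+y. \<integral>\<^sup>+a. f (a, y) \<partial>lborel \<partial>(lborel \<Otimes>\<^sub>M lborel))"
    by (simp only: lborel_prod)
  also have "\<dots> = (\<integral>\<^sup>+b. \<integral>\<^sup>+c. \<integral>\<^sup>+a. f (a, c, b) \<partial>lborel \<partial>lborel \<partial>lborel)"
    by (rule lborel_pair.nn_integral_snd[symmetric]) measurable
  finally show ?thesis .
qed

lemma nn_integral_pd_kernel_over_a:
  assumes A: "A > 0" and k: "k > -1"
  shows "(\<integral>\<^sup>+a. ennreal (pd_kernel k A B s l (a, c, b)) \<partial>lborel)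
       = ennreal (indicator {0<..} b * (Gamma (k + 1) / (A / 2) powr (k + 1)) * b powr k
                   * exp (- c\<^sup>2 / (2 * (b / A)) - B * b / 2 - s * c - l * \<bar>c\<bar>))"
proof (cases "b > 0")
  case False
  have "pd_kernel k A B s l (a, c, b) = 0" for a
    using False mult_nonneg_nonpos[of a b] by (auto simp: pd_kernel_def) (use zero_le_power2[of c] in linarith)
  then show ?thesis using False by simp
next
  case b: True
  let ?f = "\<lambda>a. ennreal (pd_kernel k A B s l (a, c, b))"
  let ?K = "b powr k * exp (- c\<^sup>2 / (2 * (b / A)) - B * b / 2 - s * c - l * \<bar>c\<bar>)"
  \<comment> \<open>Shifting \<open>a = c\<^sup>2 / b + u\<close> turns the determinant \<open>a * b - c\<^sup>2\<close> into \<open>b * u\<close>.\<close>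
  have "integral\<^sup>N lborel ?f = ennreal \<bar>1\<bar> * (\<integral>\<^sup>+u. ?f (c\<^sup>2 / b + 1 * u) \<partial>lborel)"
    by (intro nn_integral_real_affine) auto
  also have "(\<integral>\<^sup>+u. ?f (c\<^sup>2 / b + 1 * u) \<partial>lborel)
     = (\<integral>\<^sup>+u. ennreal (indicator {0<..} u * u powr k * exp (- (A / 2) * u)) * ennreal ?K \<partial>lborel)"
  proof (intro nn_integral_cong)
    fix u :: real
    have "(c\<^sup>2 / b + u) * b - c\<^sup>2 = b * u" using b by (simp add: field_simps)
    then have kern: "pd_kernel k A B s l (c\<^sup>2 / b + u, c, b) = (if 0 < c\<^sup>2 / b + u \<and> 0 < b * u
        then (b * u) powr k * exp (- (A * (c\<^sup>2 / b + u) + B * b) / 2 - s * c - l * \<bar>c\<bar>) else 0)"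
      by (simp only: pd_kernel_def prod.case)
    show "?f (c\<^sup>2 / b + 1 * u) = ennreal (indicator {0<..} u * u powr k * exp (- (A / 2) * u)) * ennreal ?K"
    proof (cases "u > 0")
      case False
      then show ?thesis using b by (simp add: kern zero_less_mult_iff)
    next
      case u: True
      have "exp (- (A * (c\<^sup>2 / b + u) + B * b) / 2 - s * c - l * \<bar>c\<bar>) = exp (- (A / 2) * u) * exp (- c\<^sup>2 / (2 * (b / A)) - B * b / 2 - s * c - l * \<bar>c\<bar>)"
        unfolding exp_add[symmetric] using b A by (simp add: field_simps)
      moreover have "0 < c\<^sup>2 / b + u" using b u by (simp add: add_nonneg_pos)
      ultimately show ?thesis
        using b u by (simp add: kern powr_mult mult_ac flip: ennreal_mult)
    qed
  qed
  also have "\<dots> = ennreal (Gamma (k + 1) / (A / 2) powr (k + 1)) * ennreal ?K"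
    using nn_integral_powr_exp[of "A / 2" k] A k by (subst nn_integral_multc) auto
  finally show ?thesis
    using b k by (simp add: Gamma_real_pos less_imp_le mult_ac flip: ennreal_mult)
qed

lemma nn_integral_pd_kernel_over_ac:
  assumes A: "A > 0" and k: "k > -1"
  shows "(\<integral>\<^sup>+c. \<integral>\<^sup>+a. ennreal (pd_kernel k A B s l (a, c, b)) \<partial>lborel \<partial>lborel)
       = ennreal (indicator {0<..} b * (Gamma (k + 1) / (A / 2) powr (k + 1)) * b powr k * exp (- B * b / 2)
                   * sqrt (2 * pi * (b / A)) * gauss_laplace s l (b / A))"
proof (cases "b > 0")
  case False
  then show ?thesis by (simp add: nn_integral_pd_kernel_over_a[OF A k])
next
  case b: True
  define G where "G = Gamma (k + 1) / (A / 2) powr (k + 1) * b powr k * exp (- B * b / 2)"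
  have G: "G \<ge> 0" using k by (simp add: G_def Gamma_real_pos less_imp_le)
  have "exp (- c\<^sup>2 / (2 * (b / A)) - B * b / 2 - s * c - l * \<bar>c\<bar>)
      = exp (- B * b / 2) * exp (- c\<^sup>2 / (2 * (b / A)) - s * c - l * \<bar>c\<bar>)" for c
    unfolding exp_add[symmetric] by (simp add: algebra_simps)
  then have "(\<integral>\<^sup>+c. \<integral>\<^sup>+a. ennreal (pd_kernel k A B s l (a, c, b)) \<partial>lborel \<partial>lborel)
      = (\<integral>\<^sup>+c. ennreal G * ennreal (exp (- c\<^sup>2 / (2 * (b / A)) - s * c - l * \<bar>c\<bar>)) \<partial>lborel)"
    using b G by (intro nn_integral_cong) (simp add: nn_integral_pd_kernel_over_a[OF A k] G_def mult_ac flip: ennreal_mult)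
  also have "\<dots> = ennreal G * (\<integral>\<^sup>+c. ennreal (exp (- c\<^sup>2 / (2 * (b / A)) - s * c - l * \<bar>c\<bar>)) \<partial>lborel)"
    by (rule nn_integral_cmult) measurable
  also have "\<dots> = ennreal G * ennreal (sqrt (2 * pi * (b / A)) * gauss_laplace s l (b / A))"
    by (simp only: nn_integral_gaussian_laplace[OF divide_pos_pos[OF b A]])
  finally show ?thesis
    using b A G by (simp add: G_def gauss_laplace_nonneg mult_ac flip: ennreal_mult)
qed

lemma nn_integral_pd_kernel:
  assumes A: "A > 0" and k: "k > -1"
  shows "(\<integral>\<^sup>+w. ennreal (pd_kernel k A B s l w) \<partial>lborel)
     = ennreal (Gamma (k + 1) * 2 powr (k + 1) * sqrt (2 * pi))
       * (\<integral>\<^sup>+t. ennreal (indicator {0<..} t * t powr (k + 1/2) * exp (- A * B * t / 2) * gauss_laplace s l t) \<partial>lborel)"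
proof -
  define G where "G = Gamma (k + 1) / (A / 2) powr (k + 1)"
  have G: "G \<ge> 0" using k by (simp add: G_def Gamma_real_pos less_imp_le)
  let ?g = "\<lambda>b. ennreal (indicator {0<..} b * G * b powr k * exp (- B * b / 2) * sqrt (2 * pi * (b / A)) * gauss_laplace s l (b / A))"
  let ?h = "\<lambda>t. ennreal (indicator {0<..} t * t powr (k + 1/2) * exp (- A * B * t / 2) * gauss_laplace s l t)"
  have "(\<integral>\<^sup>+w. ennreal (pd_kernel k A B s l w) \<partial>lborel) = integral\<^sup>N lborel ?g"
    by (subst nn_integral_lborel_triple) (simp_all add: nn_integral_pd_kernel_over_ac[OF A k] G_def)
  also have "\<dots> = ennreal \<bar>A\<bar> * (\<integral>\<^sup>+t. ?g (0 + A * t) \<partial>lborel)"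
    using A by (intro nn_integral_real_affine) auto
  also have "(\<integral>\<^sup>+t. ?g (0 + A * t) \<partial>lborel) = (\<integral>\<^sup>+t. ennreal (G * A powr k * sqrt (2 * pi)) * ?h t \<partial>lborel)"
  proof (intro nn_integral_cong)
    fix t :: real
    show "?g (0 + A * t) = ennreal (G * A powr k * sqrt (2 * pi)) * ?h t"
    proof (cases "t > 0")
      case t: True
      have "(A * t) powr k * sqrt (2 * pi * t) = A powr k * sqrt (2 * pi) * t powr (k + 1/2)"
        using A t by (simp add: powr_mult powr_add real_sqrt_mult powr_half_sqrt)
      then show ?thesis
        using A t G by (simp add: gauss_laplace_nonneg mult_ac flip: ennreal_mult)
    next
      case False
      then show ?thesis using A by (simp add: zero_less_mult_iff)
    qed
  qed
  also have "\<dots> = ennreal (G * A powr k * sqrt (2 * pi)) * integral\<^sup>N lborel ?h"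
    by (rule nn_integral_cmult) measurable
  also have "ennreal \<bar>A\<bar> * (ennreal (G * A powr k * sqrt (2 * pi)) * integral\<^sup>N lborel ?h)
      = ennreal (A * (G * A powr k * sqrt (2 * pi))) * integral\<^sup>N lborel ?h"
    using A G by (simp add: ennreal_mult mult.assoc)
  also have "A * (G * A powr k * sqrt (2 * pi)) = Gamma (k + 1) * 2 powr (k + 1) * sqrt (2 * pi)"
    using A by (simp add: G_def powr_divide powr_add field_simps)
  finally show ?thesis .
qed

section \<open>The normalising constant\<close>

lemma nn_integral_powr_atLeastAtMost_0:
  assumes "p > -1" and "X \<ge> 0"
  shows "(\<integral>\<^sup>+t. ennreal (indicator {0..X} t * t powr p) \<partial>lborel) = ennreal (X powr (p + 1) / (p + 1))"
  using nn_integral_has_integral_lebesgue[OF _ has_integral_powr_from_0[OF assms]] by simp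

lemma nn_integral_sqrt_le:
  assumes l: "l > 0" and x: "x \<ge> 0"
  shows "(\<integral>\<^sup>+t. ennreal (indicator {t. 0 < t \<and> l * sqrt t \<le> x} t * t powr (1/2)) \<partial>lborel)
       = ennreal (2 * x ^ 3 / (3 * l ^ 3))"
proof -
  have "(\<integral>\<^sup>+t. ennreal (indicator {t. 0 < t \<and> l * sqrt t \<le> x} t * t powr (1/2)) \<partial>lborel)
      = (\<integral>\<^sup>+t. ennreal (indicator {0..(x / l)\<^sup>2} t * t powr (1/2)) \<partial>lborel)"
  proof (intro nn_integral_cong)
    fix t :: real
    have "l * sqrt t \<le> x \<longleftrightarrow> sqrt t \<le> sqrt ((x / l)\<^sup>2)"
      using l x by (simp add: pos_le_divide_eq mult.commute)
    then have "l * sqrt t \<le> x \<longleftrightarrow> t \<le> (x / l)\<^sup>2"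
      by (simp only: real_sqrt_le_iff)
    then show "ennreal (indicator {t. 0 < t \<and> l * sqrt t \<le> x} t * t powr (1/2))
             = ennreal (indicator {0..(x / l)\<^sup>2} t * t powr (1/2))"
      by (cases "t > 0") (auto simp: indicator_def not_less)
  qed
  also have "\<dots> = ennreal (((x / l)\<^sup>2) powr (3/2) / (3/2))"
    by (simp add: nn_integral_powr_atLeastAtMost_0)
  also have "((x / l)\<^sup>2) powr (3/2) = (x / l) ^ 3"
    using l x by (cases "x = 0") (simp_all add: powr_powr flip: powr_numeral)
  finally show ?thesis by (simp add: power_divide mult.commute)
qed

lemma nn_integral_std_normal_abs_cube:
  "(\<integral>\<^sup>+z. ennreal (std_normal_density z * \<bar>z\<bar> ^ 3) \<partial>lborel) = ennreal (2 * sqrt (2 / pi))"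
proof -
  have "has_bochner_integral lborel (\<lambda>z. std_normal_density z * \<bar>z\<bar> ^ (2 * 1 + 1)) (sqrt (2 / pi) * 2 ^ 1 * fact 1)"
    by (rule std_normal_moment_abs_odd)
  then show ?thesis
    by (simp add: has_bochner_integral_iff nn_integral_eq_integral)
qed

lemma nn_integral_sqrt_mult_Phi:
  assumes l: "l > 0"
  shows "(\<integral>\<^sup>+t. ennreal (indicator {0<..} t * t powr (1/2) * (2 * Phi (- l * sqrt t))) \<partial>lborel)
       = ennreal (4 * sqrt (2 / pi) / (3 * l ^ 3))"
proof -
  let ?F = "\<lambda>t z. ennreal (indicator {t. 0 < t \<and> l * sqrt t \<le> \<bar>z\<bar>} t * t powr (1/2) * std_normal_density z)"
  \<comment> \<open>\<open>2 * Phi (- x)\<close> is the probability that \<open>\<bar>Z\<bar> \<ge> x\<close>; then integrate over \<open>t\<close> first (Tonelli).\<close>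
  have "(\<integral>\<^sup>+t. ennreal (indicator {0<..} t * t powr (1/2) * (2 * Phi (- l * sqrt t))) \<partial>lborel)
      = (\<integral>\<^sup>+t. \<integral>\<^sup>+z. ?F t z \<partial>lborel \<partial>lborel)"
  proof (intro nn_integral_cong)
    fix t :: real
    show "ennreal (indicator {0<..} t * t powr (1/2) * (2 * Phi (- l * sqrt t))) = (\<integral>\<^sup>+z. ?F t z \<partial>lborel)"
    proof (cases "t > 0")
      case t: True
      then have "ennreal (indicator {0<..} t * t powr (1/2) * (2 * Phi (- l * sqrt t)))
          = ennreal (t powr (1/2)) * ennreal (2 * Phi (- (l * sqrt t)))"
        by (simp add: ennreal_mult')
      also have "\<dots> = ennreal (t powr (1/2)) * (\<integral>\<^sup>+z. ennreal (indicator {z. l * sqrt t \<le> \<bar>z\<bar>} z * std_normal_density z) \<partial>lborel)"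
        using l t by (simp add: ennreal_two_Phi_minus)
      also have "\<dots> = (\<integral>\<^sup>+z. ?F t z \<partial>lborel)"
        using t by (subst nn_integral_cmult[symmetric]) (auto intro!: nn_integral_cong simp: indicator_def ennreal_mult)
      finally show ?thesis .
    qed simp
  qed
  also have "\<dots> = (\<integral>\<^sup>+z. \<integral>\<^sup>+t. ?F t z \<partial>lborel \<partial>lborel)"
    by (rule lborel_pair.Fubini') measurable
  also have "\<dots> = (\<integral>\<^sup>+z. ennreal (std_normal_density z * \<bar>z\<bar> ^ 3) * ennreal (2 / (3 * l ^ 3)) \<partial>lborel)"
  proof (intro nn_integral_cong)
    fix z :: real
    have "(\<integral>\<^sup>+t. ?F t z \<partial>lborel)
        = ennreal (std_normal_density z) * (\<integral>\<^sup>+t. ennreal (indicator {t. 0 < t \<and> l * sqrt t \<le> \<bar>z\<bar>} t * t powr (1/2)) \<partial>lborel)"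
      by (subst nn_integral_cmult[symmetric]) (auto intro!: nn_integral_cong simp: ennreal_mult mult_ac)
    then show "(\<integral>\<^sup>+t. ?F t z \<partial>lborel) = ennreal (std_normal_density z * \<bar>z\<bar> ^ 3) * ennreal (2 / (3 * l ^ 3))"
      using l by (simp only: nn_integral_sqrt_le[OF l abs_ge_zero]) (simp add: mult_ac flip: ennreal_mult)
  qed
  also have "\<dots> = ennreal (2 * sqrt (2 / pi)) * ennreal (2 / (3 * l ^ 3))"
    by (subst nn_integral_multc) (simp_all add: nn_integral_std_normal_abs_cube)
  finally show ?thesis
    using l by (simp add: ennreal_mult[symmetric])
qed

lemma bgl_unnorm_eq_pd_kernel:
  "bgl_unnorm lam a c b = (lam / 2) ^ 3 * pd_kernel 0 lam lam 0 lam (a, c, b)"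
proof -
  have "exp (- lam * \<bar>c\<bar>) * exp (- lam * a / 2) * exp (- lam * b / 2) = exp (- (lam * a + lam * b) / 2 - lam * \<bar>c\<bar>)"
    unfolding exp_add[symmetric] by (simp add: algebra_simps)
  then show ?thesis
    by (simp add: bgl_unnorm_def pd_kernel_def pos_def2_iff power3_eq_cube mult_ac)
qed

lemma C_BGL_eq:
  assumes l: "lam > 0"
  shows "C_BGL lam = 2 / 3"
proof -
  let ?I = "\<integral>\<^sup>+t. ennreal (indicator {0<..} t * t powr (1/2) * (2 * Phi (- lam * sqrt t))) \<partial>lborel"
  have "C_BGL lam = (lam / 2) ^ 3 * (LINT w|lborel. pd_kernel 0 lam lam 0 lam w)"
    unfolding C_BGL_def by (simp add: bgl_unnorm_eq_pd_kernel split_beta')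
  also have "(LINT w|lborel. pd_kernel 0 lam lam 0 lam w) = enn2real (\<integral>\<^sup>+w. ennreal (pd_kernel 0 lam lam 0 lam w) \<partial>lborel)"
    by (rule integral_eq_nn_integral) (simp_all add: pd_kernel_nonneg)
  also have "(\<integral>\<^sup>+w. ennreal (pd_kernel 0 lam lam 0 lam w) \<partial>lborel) = ennreal (2 * sqrt (2 * pi)) * ?I"
  proof -
    have "exp (- lam * lam * t / 2) * gauss_laplace 0 lam t = 2 * Phi (- lam * sqrt t)" for t
      by (simp add: gauss_laplace_def power2_eq_square mult_ac flip: exp_add)
    then show ?thesis
      using nn_integral_pd_kernel[OF l, of 0 lam 0 lam] by (simp add: mult.assoc)
  qed
  also have "?I = ennreal (4 * sqrt (2 / pi) / (3 * lam ^ 3))"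
    by (rule nn_integral_sqrt_mult_Phi[OF l])
  finally have "C_BGL lam = (lam / 2) ^ 3 * (2 * sqrt (2 * pi) * (4 * sqrt (2 / pi) / (3 * lam ^ 3)))"
    using l by (simp add: enn2real_mult)
  also have "\<dots> = sqrt (2 * pi) * sqrt (2 / pi) / 3"
    using l by (simp add: field_simps power3_eq_cube)
  also have "sqrt (2 * pi) * sqrt (2 / pi) = 2"
    by (simp add: real_sqrt_mult[symmetric])
  finally show ?thesis by simp
qed

lemma borel_measurable_gamma_half_tail[measurable]:
  "(\<lambda>x::real. LINT u:{x..}|lborel. u powr (-1/2) * exp (- u)) \<in> borel_measurable borel"
  unfolding set_lebesgue_integral_def indicator_def atLeast_iff by measurable

lemma ennreal_gamma_half_tail:
  assumes x: "x > 0"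
  shows "ennreal (LINT u:{x..}|lborel. u powr (-1/2) * exp (- u))
       = (\<integral>\<^sup>+u. ennreal (indicator {x..} u * u powr (-1/2) * exp (- u)) \<partial>lborel)"
proof -
  let ?I = "\<integral>\<^sup>+u. ennreal (indicator {x..} u * u powr (-1/2) * exp (- u)) \<partial>lborel"
  have "?I \<le> (\<integral>\<^sup>+u. ennreal (indicator {0<..} u * u powr (-1/2) * exp (- 1 * u)) \<partial>lborel)"
    using x by (intro nn_integral_mono) (auto simp: indicator_def)
  also have "\<dots> = ennreal (Gamma (-1/2 + 1) / 1 powr (-1/2 + 1))"
    by (rule nn_integral_powr_exp) auto
  finally have "?I < \<top>" using ennreal_less_top le_less_trans by blast
  moreover have "(LINT u:{x..}|lborel. u powr (-1/2) * exp (- u)) = enn2real ?I"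
    unfolding set_lebesgue_integral_def by (subst integral_eq_nn_integral) (simp_all add: mult.assoc)
  ultimately show ?thesis by simp
qed

lemma nn_integral_gamma_half_tail_inner:
  "(\<integral>\<^sup>+x. ennreal (indicator {0<..} x * x powr (1/2) * (indicator {x..} u * u powr (-1/2) * exp (- u))) \<partial>lborel)
   = ennreal (indicator {0<..} u * u powr 1 * exp (- 1 * u)) * ennreal (2/3)"
proof (cases "u > 0")
  case u: True
  have "(\<integral>\<^sup>+x. ennreal (indicator {0<..} x * x powr (1/2) * (indicator {x..} u * u powr (-1/2) * exp (- u))) \<partial>lborel)
      = ennreal (u powr (-1/2) * exp (- u)) * (\<integral>\<^sup>+x. ennreal (indicator {0..u} x * x powr (1/2)) \<partial>lborel)"
    by (subst nn_integral_cmult[symmetric]) (auto intro!: nn_integral_cong simp: indicator_def ennreal_mult' mult_ac)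
  also have "\<dots> = ennreal (u powr (-1/2) * exp (- u)) * ennreal (u powr (3/2) / (3/2))"
    using u by (simp add: nn_integral_powr_atLeastAtMost_0)
  also have "\<dots> = ennreal (u powr (-1/2) * u powr (3/2) * exp (- u)) * ennreal (2/3)"
    by (simp add: mult_ac flip: ennreal_mult)
  also have "u powr (-1/2) * u powr (3/2) = u powr 1"
    using u by (simp flip: powr_add)
  finally show ?thesis
    using u by simp
next
  case False
  then have "indicator {0<..} x * x powr (1/2) * (indicator {x..} u * u powr (-1/2) * exp (- u)) = 0" for x
    by (simp add: indicator_def)
  then show ?thesis using False by (simp only:) simp
qed

lemma double_integral_gamma_half_tail:
  "(LINT x:{0<..}|lborel. x powr (1/2) * (LINT u:{x..}|lborel. u powr (-1/2) * exp (- u))) = (2 / 3 :: real)"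
proof -
  let ?g = "\<lambda>x::real. LINT u:{x..}|lborel. u powr (-1/2) * exp (- u)"
  let ?F = "\<lambda>x u::real. ennreal (indicator {0<..} x * x powr (1/2) * (indicator {x..} u * u powr (-1/2) * exp (- u)))"
  have g_nonneg: "(LINT u:{x..}|lborel. u powr p * exp (- u)) \<ge> 0" for x p :: real
    unfolding set_lebesgue_integral_def by (intro integral_nonneg_AE) auto
  have "(LINT x:{0<..}|lborel. x powr (1/2) * ?g x) = enn2real (\<integral>\<^sup>+x. ennreal (indicator {0<..} x *\<^sub>R (x powr (1/2) * ?g x)) \<partial>lborel)"
    unfolding set_lebesgue_integral_def[of lborel "{0<..}"]
  proof (rule integral_eq_nn_integral)
    show "(\<lambda>x. indicator {0<..} x *\<^sub>R (x powr (1/2) * ?g x)) \<in> borel_measurable lborel"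
      by measurable
  qed (auto simp: g_nonneg)
  also have "(\<integral>\<^sup>+x. ennreal (indicator {0<..} x *\<^sub>R (x powr (1/2) * ?g x)) \<partial>lborel) = (\<integral>\<^sup>+x. \<integral>\<^sup>+u. ?F x u \<partial>lborel \<partial>lborel)"
  proof (intro nn_integral_cong)
    fix x :: real
    show "ennreal (indicator {0<..} x *\<^sub>R (x powr (1/2) * ?g x)) = (\<integral>\<^sup>+u. ?F x u \<partial>lborel)"
    proof (cases "x > 0")
      case True
      then have "ennreal (indicator {0<..} x *\<^sub>R (x powr (1/2) * ?g x)) = ennreal (x powr (1/2)) * ennreal (?g x)"
        by (simp add: ennreal_mult')
      also have "\<dots> = ennreal (x powr (1/2)) * (\<integral>\<^sup>+u. ennreal (indicator {x..} u * u powr (-1/2) * exp (- u)) \<partial>lborel)"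
        by (simp only: ennreal_gamma_half_tail[OF True])
      also have "\<dots> = (\<integral>\<^sup>+u. ?F x u \<partial>lborel)"
        using True by (subst nn_integral_cmult[symmetric]) (auto intro!: nn_integral_cong simp: ennreal_mult')
      finally show ?thesis .
    qed simp
  qed
  also have "\<dots> = (\<integral>\<^sup>+u. \<integral>\<^sup>+x. ?F x u \<partial>lborel \<partial>lborel)"
    by (rule lborel_pair.Fubini') (unfold indicator_def atLeast_iff, measurable)
  also have "\<dots> = (\<integral>\<^sup>+u. ennreal (indicator {0<..} u * u powr 1 * exp (- 1 * u)) \<partial>lborel) * ennreal (2/3)"
    by (simp only: nn_integral_gamma_half_tail_inner, rule nn_integral_multc) measurable
  also have "(\<integral>\<^sup>+u. ennreal (indicator {0<..} u * u powr 1 * exp (- 1 * u)) \<partial>lborel) = ennreal (Gamma (1 + 1) / 1 powr (1 + 1))"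
    by (rule nn_integral_powr_exp) auto
  finally show ?thesis
    using Gamma_fact[of 1] by (simp flip: ennreal_mult)
qed

section \<open>The marginal likelihood\<close>

lemma Smat_diag_nonneg: "Smat n y j j \<ge> 0"
  unfolding Smat_def by (intro sum_nonneg) simp

lemma lik_mult_bgl_unnorm:
  "lik n y a c b * bgl_unnorm lam a c b = (2 * pi) powr (- real n) * (lam / 2) ^ 3
     * pd_kernel (real n / 2) (lam + Smat n y 1 1) (lam + Smat n y 2 2) (Smat n y 1 2) lam (a, c, b)"
proof -
  have "exp (- (Smat n y 1 1 * a + 2 * Smat n y 1 2 * c + Smat n y 2 2 * b) / 2)
          * exp (- (lam * a + lam * b) / 2 - lam * \<bar>c\<bar>)
      = exp (- ((lam + Smat n y 1 1) * a + (lam + Smat n y 2 2) * b) / 2 - Smat n y 1 2 * c - lam * \<bar>c\<bar>)"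
    unfolding exp_add[symmetric] by (simp add: field_simps)
  then show ?thesis
    by (simp add: bgl_unnorm_eq_pd_kernel lik_def pd_kernel_def mult_ac)
qed

lemma marg_lik_eq_nn_integral:
  "marg_lik n y lam = (2 * pi) powr (- real n) * (lam / 2) ^ 3 / C_BGL lam * enn2real
     (\<integral>\<^sup>+w. ennreal (pd_kernel (real n / 2) (lam + Smat n y 1 1) (lam + Smat n y 2 2) (Smat n y 1 2) lam w) \<partial>lborel)"
proof -
  let ?K = "pd_kernel (real n / 2) (lam + Smat n y 1 1) (lam + Smat n y 2 2) (Smat n y 1 2) lam"
  have "marg_lik n y lam = (LINT w|lborel. (2 * pi) powr (- real n) * (lam / 2) ^ 3 / C_BGL lam * ?K w)"
    unfolding marg_lik_def bgl_prior_def
    by (intro Bochner_Integration.integral_cong) (auto simp: lik_mult_bgl_unnorm split: prod.split)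
  also have "\<dots> = (2 * pi) powr (- real n) * (lam / 2) ^ 3 / C_BGL lam * (LINT w|lborel. ?K w)"
    by (rule integral_mult_right_zero)
  also have "(LINT w|lborel. ?K w) = enn2real (\<integral>\<^sup>+w. ennreal (?K w) \<partial>lborel)"
    by (rule integral_eq_nn_integral) (simp_all add: pd_kernel_nonneg)
  finally show ?thesis .
qed

lemma gamma_expect_eq_nn_integral:
  assumes a: "a > 0" and F: "\<And>t. F t \<ge> 0" "F \<in> borel_measurable borel"
  shows "gamma_expect a r F
       = r powr a / Gamma a * enn2real (\<integral>\<^sup>+t. ennreal (indicator {0<..} t * t powr (a - 1) * exp (- r * t) * F t) \<partial>lborel)"
proof -
  have Ga: "Gamma a > 0" using a by (rule Gamma_real_pos)
  have "gamma_expect a r F = enn2real (\<integral>\<^sup>+t. ennreal (F t * gamma_dens a r t) \<partial>lborel)"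
    unfolding gamma_expect_def gamma_dens_def
    by (rule integral_eq_nn_integral) (use F Ga in \<open>auto intro!: mult_nonneg_nonneg\<close>)
  also have "(\<integral>\<^sup>+t. ennreal (F t * gamma_dens a r t) \<partial>lborel)
      = (\<integral>\<^sup>+t. ennreal (r powr a / Gamma a) * ennreal (indicator {0<..} t * t powr (a - 1) * exp (- r * t) * F t) \<partial>lborel)"
    using F Ga by (intro nn_integral_cong) (simp add: gamma_dens_def mult_ac flip: ennreal_mult)
  also have "\<dots> = ennreal (r powr a / Gamma a) * (\<integral>\<^sup>+t. ennreal (indicator {0<..} t * t powr (a - 1) * exp (- r * t) * F t) \<partial>lborel)"
    using F by (intro nn_integral_cmult) measurable
  finally show ?thesis
    using Ga by (simp add: enn2real_mult)
qed

lemma exp_mult_F_eq_gauss_laplace: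
  assumes l: "l > 0" and t: "t > 0"
  shows "exp (- ((A * B - (l - s)\<^sup>2) / 2) * t)
           * (Phi (l * t powr (1/2) * (s / l - 1)) + exp (2 * l * s * t) * Phi (- l * t powr (1/2) * (s / l + 1)))
         = exp (- A * B * t / 2) * gauss_laplace s l t"
proof -
  let ?E = "exp (- ((A * B - (l - s)\<^sup>2) / 2) * t)"
  have arg: "l * t powr (1/2) * (s / l - 1) = (s - l) * sqrt t" "- l * t powr (1/2) * (s / l + 1) = - (s + l) * sqrt t"
    using l t by (simp_all add: powr_half_sqrt field_simps)
  have exp: "?E = exp (- A * B * t / 2) * exp (t * (s - l)\<^sup>2 / 2)"
    "?E * exp (2 * l * s * t) = exp (- A * B * t / 2) * exp (t * (s + l)\<^sup>2 / 2)"
    unfolding exp_add[symmetric] by (simp_all add: power2_eq_square field_simps)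
  have "?E * (Phi (l * t powr (1/2) * (s / l - 1)) + exp (2 * l * s * t) * Phi (- l * t powr (1/2) * (s / l + 1)))
      = ?E * Phi (l * t powr (1/2) * (s / l - 1)) + (?E * exp (2 * l * s * t)) * Phi (- l * t powr (1/2) * (s / l + 1))"
    by (simp only: distrib_left mult.assoc)
  also have "\<dots> = exp (- A * B * t / 2) * exp (t * (s - l)\<^sup>2 / 2) * Phi ((s - l) * sqrt t)
                + exp (- A * B * t / 2) * exp (t * (s + l)\<^sup>2 / 2) * Phi (- (s + l) * sqrt t)"
    by (simp only: arg exp(2), simp only: exp(1))
  finally show ?thesis
    by (simp add: gauss_laplace_def algebra_simps)
qed

lemma marginal_constant_eq:
  assumes "D > 0"
  shows "(2 * pi) powr (- x) * (l / 2) ^ 3 * (2 powr (x / 2 + 1) * sqrt (2 * pi))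
       = l ^ 3 / (pi powr (x - 1/2) * D powr ((x + 3) / 2)) * (D / 2) powr ((x + 3) / 2)"
proof -
  have "(2 * pi) powr (- x) * (l / 2) ^ 3 * (2 powr (x / 2 + 1) * sqrt (2 * pi))
      = l ^ 3 * (2 powr (- x) * 2 powr (x / 2 + 1) * 2 powr (1/2) / 2 ^ 3) * (pi powr (- x) * pi powr (1/2))"
    by (simp add: powr_mult power_divide powr_half_sqrt real_sqrt_mult field_simps)
  also have "2 powr (- x) * 2 powr (x / 2 + 1) * 2 powr (1/2) / 2 ^ 3 = (2::real) powr (- x + (x / 2 + 1) + 1/2 - 3)"
    by (simp only: powr_add powr_diff powr_numeral)
  also have "- x + (x / 2 + 1) + 1/2 - 3 = - ((x + 3) / 2)"
    by (simp add: field_simps)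
  also have "pi powr (- x) * pi powr (1/2) = pi powr (- (x - 1/2))"
    by (simp flip: powr_add)
  also have "pi powr (- (x - 1/2)) = 1 / pi powr (x - 1/2)"
    by (rule powr_minus_divide)
  also have "(2::real) powr (- ((x + 3) / 2)) = (D / 2) powr ((x + 3) / 2) / D powr ((x + 3) / 2)"
    using assms by (simp add: powr_divide powr_minus_divide)
  finally show ?thesis by simp
qed

lemma gamma_expect_F_eq_nn_integral:
  assumes l: "l > 0" and a: "a > 0"
  shows "gamma_expect a ((A * B - (l - \<bar>s\<bar>)\<^sup>2) / 2)
           (\<lambda>t. Phi (l * t powr (1/2) * (\<bar>s\<bar> / l - 1)) + exp (2 * l * \<bar>s\<bar> * t) * Phi (- l * t powr (1/2) * (\<bar>s\<bar> / l + 1)))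
       = ((A * B - (l - \<bar>s\<bar>)\<^sup>2) / 2) powr a / Gamma a
         * enn2real (\<integral>\<^sup>+t. ennreal (indicator {0<..} t * t powr (a - 1) * exp (- A * B * t / 2) * gauss_laplace s l t) \<partial>lborel)"
  (is "gamma_expect a ?r ?F = _")
proof -
  have "?F t \<ge> 0" for t
    by (intro add_nonneg_nonneg mult_nonneg_nonneg Phi_nonneg) simp_all
  moreover have "?F \<in> borel_measurable borel"
    by measurable
  moreover have "exp (- ?r * t) * ?F t = exp (- A * B * t / 2) * gauss_laplace s l t" if "t > 0" for t
    using exp_mult_F_eq_gauss_laplace[OF l that, of A B "\<bar>s\<bar>"] by (simp add: gauss_laplace_abs)
  then have "(\<integral>\<^sup>+t. ennreal (indicator {0<..} t * t powr (a - 1) * exp (- ?r * t) * ?F t) \<partial>lborel)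
      = (\<integral>\<^sup>+t. ennreal (indicator {0<..} t * t powr (a - 1) * exp (- A * B * t / 2) * gauss_laplace s l t) \<partial>lborel)"
    by (intro nn_integral_cong) (simp add: indicator_def mult.assoc)
  ultimately show ?thesis
    using a by (simp only: gamma_expect_eq_nn_integral)
qed

theorem proposition1:
  fixes n :: nat and lam :: real and y :: "nat \<Rightarrow> nat \<Rightarrow> real"
  defines "s11 \<equiv> Smat n y 1 1" and "s12 \<equiv> Smat n y 1 2" and "s22 \<equiv> Smat n y 2 2"
  defines "D \<equiv> (lam + s11) * (lam + s22) - (lam - \<bar>s12\<bar>)\<^sup>2"
  defines "F \<equiv> (\<lambda>t::real. Phi (lam * t powr (1/2) * (\<bar>s12\<bar> / lam - 1))
                  + exp (2 * lam * \<bar>s12\<bar> * t) * Phi (- lam * t powr (1/2) * (\<bar>s12\<bar> / lam + 1)))"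
  assumes "n \<ge> 1" and "lam > 0"
    and "D / 2 > 0"
  shows "(marg_lik n y lam =
           (1 / C_BGL lam) * (lam ^ 3 * Gamma (real n / 2 + 1) * Gamma ((real n + 3) / 2)
             / (pi powr (real n - 1/2) * D powr ((real n + 3) / 2)))
           * gamma_expect ((real n + 3) / 2) (D / 2) F)
         \<and> C_BGL lam = (LINT x:{0<..}|lborel. x powr (1/2) * (LINT u:{x..}|lborel. u powr (-1/2) * exp (- u)))
         \<and> \<bar>C_BGL lam - 0.67\<bar> < 0.005"
proof -
  define A where "A = lam + s11"
  define B where "B = lam + s22"
  define a where "a = (real n + 3) / 2"
  define J where "J = (\<integral>\<^sup>+t. ennreal (indicator {0<..} t * t powr (a - 1)
                         * exp (- A * B * t / 2) * gauss_laplace s12 lam t) \<partial>lborel)"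
  have "A > 0" using \<open>lam > 0\<close> Smat_diag_nonneg[of n y 1] by (simp add: A_def s11_def)
  have "Gamma a > 0" and "D > 0"
    using \<open>D / 2 > 0\<close> by (simp_all add: a_def Gamma_real_pos)
  have "a - 1 = real n / 2 + 1/2" by (simp add: a_def field_simps)
  then have M: "marg_lik n y lam = (2 * pi) powr (- real n) * (lam / 2) ^ 3 / C_BGL lam
                 * (Gamma (real n / 2 + 1) * 2 powr (real n / 2 + 1) * sqrt (2 * pi)) * enn2real J"
    using marg_lik_eq_nn_integral[of n y lam] nn_integral_pd_kernel[OF \<open>A > 0\<close>, of "real n / 2" B s12 lam]
    by (simp add: J_def A_def B_def s11_def s12_def s22_def enn2real_mult)
  have E: "gamma_expect a (D / 2) F = (D / 2) powr a / Gamma a * enn2real J"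
    unfolding D_def F_def J_def A_def B_def using \<open>lam > 0\<close>
    by (rule gamma_expect_F_eq_nn_integral) (simp add: a_def)
  have "marg_lik n y lam = Gamma (real n / 2 + 1) / C_BGL lam * enn2real J
      * ((2 * pi) powr (- real n) * (lam / 2) ^ 3 * (2 powr (real n / 2 + 1) * sqrt (2 * pi)))"
    unfolding M by (simp add: mult_ac)
  also have "\<dots> = Gamma (real n / 2 + 1) / C_BGL lam * enn2real J
      * (lam ^ 3 / (pi powr (real n - 1/2) * D powr a) * (D / 2) powr a)"
    unfolding a_def by (simp only: marginal_constant_eq[OF \<open>D > 0\<close>])
  also have "\<dots> = (1 / C_BGL lam) * (lam ^ 3 * Gamma (real n / 2 + 1) * Gamma a
                     / (pi powr (real n - 1/2) * D powr a)) * gamma_expect a (D / 2) F"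
    unfolding E using \<open>Gamma a > 0\<close> by (simp add: field_simps)
  finally have "marg_lik n y lam = (1 / C_BGL lam) * (lam ^ 3 * Gamma (real n / 2 + 1) * Gamma a
                     / (pi powr (real n - 1/2) * D powr a)) * gamma_expect a (D / 2) F" .
  moreover have "C_BGL lam = 2 / 3"
    using \<open>lam > 0\<close> by (rule C_BGL_eq)
  ultimately show ?thesis
    using double_integral_gamma_half_tail by (simp only: a_def) simp
qed

end
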